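(* Let $\varphi^{(0)}=a^{(0)}_kq^k+\sum_{j\ge k+1}a^{(0)}_jq^j$ and $\psi=b_0+b_1q+\sum_{j\ge2}b_jq^j$ be formal power series with integer coefficients, where $a^{(0)}_k\ge1$, $b_0,b_1\ge1$ and $b_j\ge0$ for all $j\ge2$. For $n\ge0$ let $\varphi^{(n)}=\varphi^{(0)}\psi^n=\sum_{j\ge k}a^{(n)}_jq^j$ and $$M_n=\max\{m\in\mathbb N: a^{(n)}_j>0\text{ for all }k\le j\le m\}.$$ Then the sequence $(M_n)_{n\ge0}$ is nondecreasing and unbounded. *)

theory Defs
  imports "HOL-Computational_Algebra.Formal_Power_Series" "HOL-Library.Extended_Nat"
begin

text \<open>M k f = max {m in N : coefficient j of f is > 0 for all k <= j <= m},
  taken in enat so that it is infinity when all coefficients from k on are positive.\<close>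
definition M_index :: "nat \<Rightarrow> int fps \<Rightarrow> enat" where
  "M_index k f = Sup {enat m | m. \<forall>j. k \<le> j \<and> j \<le> m \<longrightarrow> fps_nth f j > 0}"

end

theory Submission
  imports Defs
begin

unbundle fps_syntax

text \<open>Multiplying by \<open>\<psi>\<close> cannot destroy positivity of the coefficients \<open>a\<^sub>k, \<dots>, a\<^sub>m\<close>,
  because \<open>\<psi>\<close> has nonnegative coefficients and \<open>b\<^sub>0 > 0\<close>; this gives monotonicity.
  For unboundedness, comparing coefficients in \<open>(\<psi>\<^sup>n\<^sup>+\<^sup>1)' = (n+1) \<psi>' \<psi>\<^sup>n\<close> shows that, for each
  fixed \<open>d\<close>, the coefficient of \<open>q\<^sup>d\<close> in \<open>\<psi>\<^sup>n\<close> eventually exceeds any fixed multiple of all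
  lower coefficients. So for large \<open>n\<close> the coefficient of \<open>q\<^sup>j\<close> in \<open>\<phi>\<psi>\<^sup>n\<close> is dominated by its
  positive term \<open>a\<^sub>k \<cdot> [q\<^sup>j\<^sup>-\<^sup>k] \<psi>\<^sup>n\<close>.\<close>

lemma fps_mult_nth_ge_term:
  fixes f g :: "'a::linordered_idom fps"
  assumes "\<forall>i\<le>j. 0 \<le> f $ i * g $ (j - i)" and "i \<le> j"
  shows "f $ i * g $ (j - i) \<le> (f * g) $ j"
  unfolding fps_mult_nth by (rule member_le_sum) (use assms in auto)

lemma fps_mult_nth_nonneg:
  fixes f g :: "'a::linordered_idom fps"
  assumes "\<forall>i. 0 \<le> f $ i" and "\<forall>i. 0 \<le> g $ i"
  shows "0 \<le> (f * g) $ j"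
  unfolding fps_mult_nth using assms by (simp add: sum_nonneg)

lemma fps_power_nth_nonneg:
  fixes g :: "'a::linordered_idom fps"
  assumes "\<forall>i. 0 \<le> g $ i"
  shows "0 \<le> (g ^ n) $ j"
proof (induction n arbitrary: j)
  case 0
  then show ?case by (simp add: fps_one_nth)
next
  case (Suc n)
  then show ?case using assms by (simp add: fps_mult_nth_nonneg)
qed

lemma fps_mult_nth_eq_0_below:
  fixes f g :: "'a::semiring_0 fps"
  assumes "\<forall>i<k. f $ i = 0" and "j < k"
  shows "(f * g) $ j = 0"
  unfolding fps_mult_nth using assms by (auto intro!: sum.neutral)

lemma fps_power_nth_pos:
  fixes g :: "'a::linordered_idom fps"
  assumes nonneg: "\<forall>i. 0 \<le> g $ i" and "0 < g $ 0" and "0 < g $ 1" and "d \<le> n"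
  shows "0 < (g ^ n) $ d"
  using \<open>d \<le> n\<close>
proof (induction n arbitrary: d)
  case 0
  then show ?case by (simp add: fps_one_nth)
next
  case (Suc n)
  have terms_nonneg: "\<forall>i\<le>d. 0 \<le> g $ i * (g ^ n) $ (d - i)"
    using nonneg by (simp add: fps_power_nth_nonneg)
  show ?case
  proof (cases d)
    case 0
    then have "g $ 0 * (g ^ n) $ d \<le> (g ^ Suc n) $ d"
      using fps_mult_nth_ge_term[OF terms_nonneg, of 0] by simp
    moreover have "0 < g $ 0 * (g ^ n) $ d"
      using Suc 0 \<open>0 < g $ 0\<close> by simp
    ultimately show ?thesis by order
  next
    case (Suc d')
    then have "g $ 1 * (g ^ n) $ d' \<le> (g ^ Suc n) $ d"
      using fps_mult_nth_ge_term[OF terms_nonneg, of 1] by simp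
    moreover have "0 < g $ 1 * (g ^ n) $ d'"
      using Suc.IH Suc.prems Suc \<open>0 < g $ 1\<close> by simp
    ultimately show ?thesis by order
  qed
qed

lemma fps_mult_nth_pos_if_pos_range:
  fixes f g :: "'a::linordered_idom fps"
  assumes "\<forall>i<k. f $ i = 0" and "\<forall>i. k \<le> i \<and> i \<le> m \<longrightarrow> 0 < f $ i"
    and "\<forall>i. 0 \<le> g $ i" and "0 < g $ 0" and "k \<le> j" and "j \<le> m"
  shows "0 < (f * g) $ j"
proof -
  have "\<forall>i\<le>j. 0 \<le> f $ i"
    using assms(1,2,6) by (metis less_le_not_le nle_le order.trans)
  then have "\<forall>i\<le>j. 0 \<le> f $ i * g $ (j - i)"
    using assms(3) by simp
  from fps_mult_nth_ge_term[OF this, of j] have "f $ j * g $ 0 \<le> (f * g) $ j"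
    by simp
  moreover have "0 < f $ j * g $ 0"
    using assms(2,4-6) by simp
  ultimately show ?thesis by order
qed

lemma M_index_geI:
  assumes "\<forall>j. k \<le> j \<and> j \<le> m \<longrightarrow> 0 < f $ j"
  shows "enat m \<le> M_index k f"
  unfolding M_index_def using assms by (intro Sup_upper) blast

lemma M_index_le_M_index_mult:
  fixes f g :: "int fps"
  assumes "\<forall>i<k. f $ i = 0" and "\<forall>i. 0 \<le> g $ i" and "0 < g $ 0"
  shows "M_index k f \<le> M_index k (f * g)"
  unfolding M_index_def
  using fps_mult_nth_pos_if_pos_range[OF assms(1) _ assms(2,3)]
  by (intro Sup_subset_mono) blast

text \<open>Coefficient \<open>d\<close> of \<open>(g\<^sup>n\<^sup>+\<^sup>1)' = (n+1) g' g\<^sup>n\<close>, keeping only the term \<open>g\<^sub>1\<close> of \<open>g'\<close>.\<close>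

lemma fps_power_Suc_nth_deriv_bound:
  fixes g :: "'a::linordered_idom fps"
  assumes nonneg: "\<forall>i. 0 \<le> g $ i"
  shows "of_nat (Suc n) * g $ 1 * (g ^ n) $ d \<le> of_nat (Suc d) * (g ^ Suc n) $ Suc d"
proof -
  have "\<forall>i\<le>d. 0 \<le> fps_deriv g $ i * (g ^ n) $ (d - i)"
    using nonneg by (simp add: fps_power_nth_nonneg)
  from fps_mult_nth_ge_term[OF this, of 0]
  have "g $ 1 * (g ^ n) $ d \<le> (fps_deriv g * g ^ n) $ d"
    by simp
  then have "of_nat (Suc n) * (g $ 1 * (g ^ n) $ d)
      \<le> of_nat (Suc n) * (fps_deriv g * g ^ n) $ d"
    by (rule mult_left_mono) simp
  also have "\<dots> = fps_deriv (g ^ Suc n) $ d"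
    by (simp only: fps_deriv_power fps_mult_left_const_nth mult.assoc diff_Suc_1)
  also have "\<dots> = of_nat (Suc d) * (g ^ Suc n) $ Suc d"
    by (simp only: fps_deriv_nth Suc_eq_plus1)
  finally show ?thesis by (simp add: mult.assoc)
qed

lemma fps_power_Suc_nth_le:
  fixes g :: "'a::linordered_idom fps"
  assumes nonneg: "\<forall>i. 0 \<le> g $ i"
    and below: "\<forall>e\<le>d. (g ^ n) $ e \<le> (g ^ n) $ d" and "e \<le> d"
  shows "(g ^ Suc n) $ e \<le> (\<Sum>i\<le>d. g $ i) * (g ^ n) $ d"
proof -
  have "(g ^ Suc n) $ e = (\<Sum>i=0..e. g $ i * (g ^ n) $ (e - i))"
    by (simp add: fps_mult_nth)
  also have "\<dots> \<le> (\<Sum>i=0..e. g $ i * (g ^ n) $ d)"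
    using nonneg below \<open>e \<le> d\<close> by (intro sum_mono mult_left_mono) auto
  also have "\<dots> = (\<Sum>i\<le>e. g $ i) * (g ^ n) $ d"
    by (simp add: sum_distrib_right atLeast0AtMost)
  also have "\<dots> \<le> (\<Sum>i\<le>d. g $ i) * (g ^ n) $ d"
    using nonneg \<open>e \<le> d\<close>
    by (intro mult_right_mono sum_mono2 fps_power_nth_nonneg) auto
  finally show ?thesis .
qed

lemma fps_power_nth_dominates_eventually:
  fixes g :: "int fps"
  assumes nonneg: "\<forall>i. 0 \<le> g $ i" and "0 < g $ 1"
  shows "eventually (\<lambda>n. \<forall>e<d. of_nat L * (g ^ n) $ e \<le> (g ^ n) $ d) sequentially"
proof (induction d arbitrary: L)
  case 0
  then show ?case by simp
next
  case (Suc d)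
  let ?c = "\<lambda>n e. (g ^ n) $ e"
  define S where "S = (\<Sum>i\<le>d. g $ i)"
  have "S \<ge> 0"
    unfolding S_def using nonneg by (simp add: sum_nonneg)
  have "1 \<le> g $ 1"
    using \<open>0 < g $ 1\<close> by simp
  have "eventually (\<lambda>n. (\<forall>e\<le>d. ?c n e \<le> ?c n d) \<and> L * Suc d * nat S \<le> Suc n) sequentially"
    using Suc.IH[of 1] eventually_ge_at_top[of "L * Suc d * nat S"]
    by eventually_elim (auto simp: le_less)
  then have "eventually (\<lambda>n. \<forall>e<Suc d. of_nat L * ?c (Suc n) e \<le> ?c (Suc n) (Suc d)) sequentially"
  proof eventually_elim
    case (elim n)
    then have below: "\<forall>e\<le>d. ?c n e \<le> ?c n d" and "L * Suc d * nat S \<le> Suc n"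
      by auto
    have "of_nat L * of_nat (Suc d) * S = (of_nat (L * Suc d * nat S) :: int)"
      using \<open>S \<ge> 0\<close> by (simp add: algebra_simps)
    also have "\<dots> \<le> of_nat (Suc n)"
      using \<open>L * Suc d * nat S \<le> Suc n\<close> by (rule of_nat_mono)
    finally have large: "of_nat L * of_nat (Suc d) * S \<le> (of_nat (Suc n) :: int)" .
    have "0 \<le> ?c n d"
      using nonneg by (rule fps_power_nth_nonneg)
    show ?case
    proof (intro allI impI)
      fix e assume "e < Suc d"
      have "of_nat (Suc d) * (of_nat L * ?c (Suc n) e)
          \<le> of_nat (Suc d) * (of_nat L * (S * ?c n d))"
        using fps_power_Suc_nth_le[OF nonneg below, of e] \<open>e < Suc d\<close>
        by (intro mult_left_mono) (auto simp: S_def)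
      also have "\<dots> = (of_nat L * of_nat (Suc d) * S) * ?c n d"
        by (simp add: algebra_simps)
      also have "\<dots> \<le> of_nat (Suc n) * ?c n d"
        using large \<open>0 \<le> ?c n d\<close> by (rule mult_right_mono)
      also have "\<dots> \<le> of_nat (Suc n) * (g $ 1 * ?c n d)"
        using mult_right_mono[OF \<open>1 \<le> g $ 1\<close> \<open>0 \<le> ?c n d\<close>] by (intro mult_left_mono) simp_all
      also have "\<dots> \<le> of_nat (Suc d) * ?c (Suc n) (Suc d)"
        using fps_power_Suc_nth_deriv_bound[OF nonneg] by (simp only: mult.assoc)
      finally show "of_nat L * ?c (Suc n) e \<le> ?c (Suc n) (Suc d)"
        by (simp only: mult_le_cancel_left_pos of_nat_0_less_iff zero_less_Suc)
    qed
  qed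
  then show ?case
    using eventually_sequentially_Suc[of "\<lambda>n. \<forall>e<Suc d. of_nat L * ?c n e \<le> ?c n (Suc d)"] by blast
qed

lemma fps_mult_nth_pos_if_dominated:
  fixes f g :: "'a::linordered_idom fps"
  assumes zero_below: "\<forall>i<k. f $ i = 0" and "0 < f $ k" and "k \<le> j"
    and g_nonneg: "\<forall>i. 0 \<le> g $ i" and "0 < g $ (j - k)"
    and dominated: "\<forall>e<j - k. of_nat L * g $ e \<le> g $ (j - k)"
    and "(\<Sum>i\<in>{k<..j}. \<bar>f $ i\<bar>) < of_nat L * f $ k"
  shows "0 < (f * g) $ j"
proof -
  let ?R = "{0..j} - {k}"
  have term_bound: "- (\<bar>f $ i\<bar> * g $ (j - k)) \<le> of_nat L * (f $ i * g $ (j - i))"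
    if "i \<in> ?R" for i
  proof (cases "i < k")
    case True
    then show ?thesis using zero_below by simp
  next
    case False
    with that have "of_nat L * g $ (j - i) \<le> g $ (j - k)"
      using dominated by auto
    then have "\<bar>f $ i\<bar> * (of_nat L * g $ (j - i)) \<le> \<bar>f $ i\<bar> * g $ (j - k)"
      by (rule mult_left_mono) simp
    moreover have "\<bar>of_nat L * (f $ i * g $ (j - i))\<bar> = \<bar>f $ i\<bar> * (of_nat L * g $ (j - i))"
      using g_nonneg by (simp add: abs_mult)
    ultimately show ?thesis by linarith
  qed
  have "(\<Sum>i\<in>{k<..j}. \<bar>f $ i\<bar>) = (\<Sum>i\<in>?R. \<bar>f $ i\<bar>)"
    using zero_below by (intro sum.mono_neutral_left) (auto simp: linorder_not_less le_less)
  then have "- ((\<Sum>i\<in>{k<..j}. \<bar>f $ i\<bar>) * g $ (j - k)) = (\<Sum>i\<in>?R. - (\<bar>f $ i\<bar> * g $ (j - k)))"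
    by (simp add: sum_distrib_right sum_negf)
  also have "\<dots> \<le> (\<Sum>i\<in>?R. of_nat L * (f $ i * g $ (j - i)))"
    using term_bound by (rule sum_mono)
  finally have "- ((\<Sum>i\<in>{k<..j}. \<bar>f $ i\<bar>) * g $ (j - k))
      \<le> (\<Sum>i\<in>?R. of_nat L * (f $ i * g $ (j - i)))" .
  moreover have "(\<Sum>i\<in>{k<..j}. \<bar>f $ i\<bar>) * g $ (j - k) < of_nat L * f $ k * g $ (j - k)"
    using assms(7) \<open>0 < g $ (j - k)\<close> by (rule mult_strict_right_mono)
  moreover have "of_nat L * (f * g) $ j
      = of_nat L * f $ k * g $ (j - k) + (\<Sum>i\<in>?R. of_nat L * (f $ i * g $ (j - i)))"
    using \<open>k \<le> j\<close> by (simp add: fps_mult_nth sum.remove[of _ k] distrib_left sum_distrib_left mult.assoc)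
  ultimately have "0 < of_nat L * (f * g) $ j"
    by linarith
  then show ?thesis
    by (simp add: zero_less_mult_iff)
qed

lemma M_index_mult_power_mono:
  fixes phi psi :: "int fps"
  assumes "\<forall>i<k. phi $ i = 0" and "\<forall>i. 0 \<le> psi $ i" and "0 < psi $ 0"
  shows "mono (\<lambda>n. M_index k (phi * psi ^ n))"
proof -
  have "M_index k (phi * psi ^ n) \<le> M_index k (phi * psi ^ Suc n)" for n
    using M_index_le_M_index_mult[OF _ assms(2,3), of k "phi * psi ^ n"] assms(1)
    by (simp add: fps_mult_nth_eq_0_below mult.assoc mult.commute[of "psi ^ n"])
  then show ?thesis
    by (simp add: mono_iff_le_Suc)
qed

lemma M_index_mult_power_unbounded:
  fixes phi psi :: "int fps"
  assumes zero_below: "\<forall>i<k. phi $ i = 0" and "0 < phi $ k"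
    and psi_nonneg: "\<forall>i. 0 \<le> psi $ i" and "0 < psi $ 0" and "0 < psi $ 1"
  shows "\<exists>n. enat B \<le> M_index k (phi * psi ^ n)"
proof -
  define L where "L = nat (\<Sum>i\<le>B. \<bar>phi $ i\<bar>) + 1"
  have "eventually (\<lambda>n. \<forall>d\<in>{..B}. \<forall>e<d. of_nat L * (psi ^ n) $ e \<le> (psi ^ n) $ d) sequentially"
    using fps_power_nth_dominates_eventually[OF psi_nonneg \<open>0 < psi $ 1\<close>]
    by (intro eventually_ball_finite) auto
  then obtain n where dominated: "\<forall>d\<in>{..B}. \<forall>e<d. of_nat L * (psi ^ n) $ e \<le> (psi ^ n) $ d"
    and "B \<le> n"
    unfolding eventually_sequentially by (meson nle_le order.trans)
  have "0 < (phi * psi ^ n) $ j" if "k \<le> j" and "j \<le> B" for j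
  proof (rule fps_mult_nth_pos_if_dominated[OF zero_below \<open>0 < phi $ k\<close> \<open>k \<le> j\<close>])
    show "0 < (psi ^ n) $ (j - k)"
      using fps_power_nth_pos[OF psi_nonneg] assms(4,5) \<open>j \<le> B\<close> \<open>B \<le> n\<close> by simp
    have "(\<Sum>i\<in>{k<..j}. \<bar>phi $ i\<bar>) \<le> (\<Sum>i\<le>B. \<bar>phi $ i\<bar>)"
      using \<open>j \<le> B\<close> by (intro sum_mono2) auto
    also have "\<dots> < of_nat L"
      unfolding L_def by simp
    also have "\<dots> \<le> of_nat L * phi $ k"
      using mult_left_mono[of 1 "phi $ k" "of_nat L"] \<open>0 < phi $ k\<close> by simp
    finally show "(\<Sum>i\<in>{k<..j}. \<bar>phi $ i\<bar>) < of_nat L * phi $ k" .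
  qed (use psi_nonneg fps_power_nth_nonneg dominated \<open>j \<le> B\<close> in auto)
  then show ?thesis
    by (blast intro: M_index_geI)
qed

theorem lemma7p2:
  fixes phi psi :: "int fps" and k :: nat
  assumes "\<forall>j<k. fps_nth phi j = 0"
    and "fps_nth phi k \<ge> 1"
    and "fps_nth psi 0 \<ge> 1" and "fps_nth psi 1 \<ge> 1"
    and "\<forall>j\<ge>2. fps_nth psi j \<ge> 0"
  shows "mono (\<lambda>n. M_index k (phi * psi ^ n)) \<and>
         (\<forall>B::nat. \<exists>n. enat B \<le> M_index k (phi * psi ^ n))"
proof -
  have psi_nonneg: "\<forall>i. 0 \<le> psi $ i"
  proof
    fix i
    show "0 \<le> psi $ i"
      using assms(3-5) by (cases "2 \<le> i") (auto simp: not_le less_2_cases_iff)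
  qed
  show ?thesis
    using M_index_mult_power_mono[OF assms(1) psi_nonneg]
      M_index_mult_power_unbounded[OF assms(1) _ psi_nonneg] assms(2-4)
    by simp
qed

end
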